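(* Let $\mathcal{M}_{AK}=(W_A, W_K, (R_y)_{y \in W_K}, (S_x)_{x \in W_A}, V)$ be an AK model and $\mathcal{M}^\beta_{EL}$ its induced EL model. Then for every EL formula $\varphi$, every $x\in W_A$ and every $y\in W_K$: $\mathcal{M}_{AK},(x,y)\models T(\varphi)$ if and only if $\mathcal{M}^\beta_{EL},y\models\varphi$.
   Context: Epistemic logic: disjoint sets $\mathbf{Prop}$, $\mathbf{A}$; formulas $\varphi ::= p \mid \neg\varphi \mid \varphi\land\varphi \mid K_i\varphi$; EL models $(W,(R_i)_{i\in\mathbf{A}},V)$ with $W\neq\emptyset$, $R_i\subseteq W\times W$, $V:\mathbf{Prop}\to\mathcal{P}(W)$; $w\models p$ iff $w\in V(p)$, Booleans as usual, $w\models K_i\varphi$ iff $v\models\varphi$ for all $v$ with $wR_iv$. Agent-knowledge logic: pairwise disjoint sets $\mathbf{Prop}_A,\mathbf{Prop}_K,\mathbf{Nom}_A,\mathbf{Nom}_K$; formulas $\varphi ::= p_A \mid p_K \mid a \mid k \mid \neg\varphi \mid \varphi\land\varphi \mid \Box_A\varphi \mid \Box_K\varphi \mid @_a\varphi \mid @_k\varphi$. AK models $(W_A, W_K, (R_y)_{y \in W_K}, (S_x)_{x \in W_A}, V)$: $W_A,W_K$ non-empty, $R_y\subseteq W_A\times W_A$, $S_x\subseteq W_K\times W_K$, $V$ sends $\mathbf{Prop}_A\cup\mathbf{Nom}_A$ to subsets of $W_A$ and $\mathbf{Prop}_K\cup\mathbf{Nom}_K$ to subsets of $W_K$, with $V(a)=\{a^V\}$,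 $V(k)=\{k^V\}$ singletons for nominals. Satisfaction at $(x,y)$: $p_A$ iff $x\in V(p_A)$; $p_K$ iff $y\in V(p_K)$; $a$ iff $x=a^V$; $k$ iff $y=k^V$; Booleans as usual; $\Box_A\varphi$ iff $(x',y)\models\varphi$ for all $x'$ with $xR_yx'$; $\Box_K\varphi$ iff $(x,y')\models\varphi$ for all $y'$ with $yS_xy'$; $@_a\varphi$ iff $(a^V,y)\models\varphi$; $@_k\varphi$ iff $(x,k^V)\models\varphi$. Translation $T$: bijections $\mathbf{Prop}\to\mathbf{Prop}_K$ and $\mathbf{A}\to\mathbf{Nom}_A$, $T(\neg\varphi)=\neg T(\varphi)$, $T(\varphi\land\psi)=T(\varphi)\land T(\psi)$, $T(K_i\varphi)=@_{T(i)}\Box_KT(\varphi)$. Induced EL model: $\mathcal{M}^\beta_{EL}=(W_K,(S^\beta_i)_{i\in\mathbf{A}},V^\beta)$ where $y S^\beta_i z$ iff $y S_{T(i)^V} z$ in $\mathcal{M}_{AK}$, and $V^\beta(p)=V(T(p))$ for $p\in\mathbf{Prop}$. *)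

theory Defs
  imports Main
begin

datatype ('p, 'i) el_fm =
    EProp 'p
  | ENeg "('p, 'i) el_fm"
  | EConj "('p, 'i) el_fm" "('p, 'i) el_fm"
  | EK 'i "('p, 'i) el_fm"

record ('w, 'p, 'i) el_model =
  el_W :: "'w set"
  el_R :: "'i \<Rightarrow> ('w \<times> 'w) set"
  el_V :: "'p \<Rightarrow> 'w set"

definition el_model :: "('w, 'p, 'i) el_model \<Rightarrow> bool" where
  "el_model M \<longleftrightarrow> el_W M \<noteq> {} \<and> (\<forall>i. el_R M i \<subseteq> el_W M \<times> el_W M)
     \<and> (\<forall>p. el_V M p \<subseteq> el_W M)"

fun el_sat :: "('w, 'p, 'i) el_model \<Rightarrow> 'w \<Rightarrow> ('p, 'i) el_fm \<Rightarrow> bool" where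
  "el_sat M w (EProp p) \<longleftrightarrow> w \<in> el_V M p"
| "el_sat M w (ENeg \<phi>) \<longleftrightarrow> \<not> el_sat M w \<phi>"
| "el_sat M w (EConj \<phi> \<psi>) \<longleftrightarrow> el_sat M w \<phi> \<and> el_sat M w \<psi>"
| "el_sat M w (EK i \<phi>) \<longleftrightarrow> (\<forall>v. (w, v) \<in> el_R M i \<longrightarrow> el_sat M v \<phi>)"

text \<open>The four pairwise disjoint symbol sets Prop_A, Prop_K, Nom_A, Nom_K are the
 types 'pa, 'pk, 'na, 'nk, kept disjoint by distinct constructors.\<close>

datatype ('pa, 'pk, 'na, 'nk) ak_fm =
    PA 'pa
  | PK 'pk
  | NA 'na
  | NK 'nk
  | ANeg "('pa, 'pk, 'na, 'nk) ak_fm"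
  | AConj "('pa, 'pk, 'na, 'nk) ak_fm" "('pa, 'pk, 'na, 'nk) ak_fm"
  | BoxA "('pa, 'pk, 'na, 'nk) ak_fm"
  | BoxK "('pa, 'pk, 'na, 'nk) ak_fm"
  | AtA 'na "('pa, 'pk, 'na, 'nk) ak_fm"
  | AtK 'nk "('pa, 'pk, 'na, 'nk) ak_fm"

text \<open>The valuation V is split into its four components by symbol sort.\<close>

record ('wa, 'wk, 'pa, 'pk, 'na, 'nk) ak_model =
  WA :: "'wa set"
  WK :: "'wk set"
  Rel :: "'wk \<Rightarrow> ('wa \<times> 'wa) set"
  Srel :: "'wa \<Rightarrow> ('wk \<times> 'wk) set"
  VPA :: "'pa \<Rightarrow> 'wa set"
  VPK :: "'pk \<Rightarrow> 'wk set"
  VNA :: "'na \<Rightarrow> 'wa set"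
  VNK :: "'nk \<Rightarrow> 'wk set"

definition ak_model :: "('wa, 'wk, 'pa, 'pk, 'na, 'nk) ak_model \<Rightarrow> bool" where
  "ak_model M \<longleftrightarrow>
     WA M \<noteq> {} \<and> WK M \<noteq> {}
   \<and> (\<forall>y\<in>WK M. Rel M y \<subseteq> WA M \<times> WA M)
   \<and> (\<forall>x\<in>WA M. Srel M x \<subseteq> WK M \<times> WK M)
   \<and> (\<forall>p. VPA M p \<subseteq> WA M) \<and> (\<forall>p. VPK M p \<subseteq> WK M)
   \<and> (\<forall>a. \<exists>x\<in>WA M. VNA M a = {x})
   \<and> (\<forall>k. \<exists>y\<in>WK M. VNK M k = {y})"

definition nomA :: "('wa, 'wk, 'pa, 'pk, 'na, 'nk) ak_model \<Rightarrow> 'na \<Rightarrow> 'wa" where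
  "nomA M a = (THE x. VNA M a = {x})"

definition nomK :: "('wa, 'wk, 'pa, 'pk, 'na, 'nk) ak_model \<Rightarrow> 'nk \<Rightarrow> 'wk" where
  "nomK M k = (THE y. VNK M k = {y})"

fun ak_sat :: "('wa, 'wk, 'pa, 'pk, 'na, 'nk) ak_model \<Rightarrow> 'wa \<Rightarrow> 'wk
                 \<Rightarrow> ('pa, 'pk, 'na, 'nk) ak_fm \<Rightarrow> bool" where
  "ak_sat M x y (PA p) \<longleftrightarrow> x \<in> VPA M p"
| "ak_sat M x y (PK p) \<longleftrightarrow> y \<in> VPK M p"
| "ak_sat M x y (NA a) \<longleftrightarrow> x = nomA M a"
| "ak_sat M x y (NK k) \<longleftrightarrow> y = nomK M k"
| "ak_sat M x y (ANeg \<phi>) \<longleftrightarrow> \<not> ak_sat M x y \<phi>"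
| "ak_sat M x y (AConj \<phi> \<psi>) \<longleftrightarrow> ak_sat M x y \<phi> \<and> ak_sat M x y \<psi>"
| "ak_sat M x y (BoxA \<phi>) \<longleftrightarrow> (\<forall>x'. (x, x') \<in> Rel M y \<longrightarrow> ak_sat M x' y \<phi>)"
| "ak_sat M x y (BoxK \<phi>) \<longleftrightarrow> (\<forall>y'. (y, y') \<in> Srel M x \<longrightarrow> ak_sat M x y' \<phi>)"
| "ak_sat M x y (AtA a \<phi>) \<longleftrightarrow> ak_sat M (nomA M a) y \<phi>"
| "ak_sat M x y (AtK k \<phi>) \<longleftrightarrow> ak_sat M x (nomK M k) \<phi>"

fun transl :: "('p \<Rightarrow> 'pk) \<Rightarrow> ('i \<Rightarrow> 'na) \<Rightarrow> ('p, 'i) el_fm \<Rightarrow> ('pa, 'pk, 'na, 'nk) ak_fm" where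
  "transl tp ta (EProp p) = PK (tp p)"
| "transl tp ta (ENeg \<phi>) = ANeg (transl tp ta \<phi>)"
| "transl tp ta (EConj \<phi> \<psi>) = AConj (transl tp ta \<phi>) (transl tp ta \<psi>)"
| "transl tp ta (EK i \<phi>) = AtA (ta i) (BoxK (transl tp ta \<phi>))"

definition induced_el :: "('p \<Rightarrow> 'pk) \<Rightarrow> ('i \<Rightarrow> 'na)
    \<Rightarrow> ('wa, 'wk, 'pa, 'pk, 'na, 'nk) ak_model \<Rightarrow> ('wk, 'p, 'i) el_model" where
  "induced_el tp ta M =
     \<lparr> el_W = WK M,
       el_R = (\<lambda>i. Srel M (nomA M (ta i))),
       el_V = (\<lambda>p. VPK M (tp p)) \<rparr>"

end

theory Submission
  imports Defs
begin

text \<open>Every translated formula is a Boolean combination of formulas PK p and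
  AtA a (BoxK \<psi>), so its truth at (x, y) does not depend on x; and AtA (ta i) (BoxK \<psi>)
  at y quantifies over exactly the Srel-successors of y for the world named ta i, which are
  the successors of y for agent i in the induced model.\<close>

lemma ak_sat_transl_iff_el_sat_induced:
  "ak_sat M x y (transl tp ta \<phi>) \<longleftrightarrow> el_sat (induced_el tp ta M) y \<phi>"
proof (induction \<phi> arbitrary: x y)
  case (EProp p)
  show ?case by (simp add: induced_el_def)
next
  case (ENeg \<phi>)
  then show ?case by simp
next
  case (EConj \<phi> \<psi>)
  then show ?case by simp
next
  case (EK i \<phi>)
  have "ak_sat M x y (transl tp ta (EK i \<phi>))
      \<longleftrightarrow> (\<forall>y'. (y, y') \<in> Srel M (nomA M (ta i)) \<longrightarrow> ak_sat M (nomA M (ta i)) y' (transl tp ta \<phi>))"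
    by simp
  also have "\<dots> \<longleftrightarrow> (\<forall>y'. (y, y') \<in> el_R (induced_el tp ta M) i \<longrightarrow> el_sat (induced_el tp ta M) y' \<phi>)"
    using EK.IH by (simp add: induced_el_def)
  finally show ?case by simp
qed

theorem mainTheorem4:
  fixes M :: "('wa, 'wk, 'pa, 'pk, 'na, 'nk) ak_model"
    and tp :: "'p \<Rightarrow> 'pk" and ta :: "'i \<Rightarrow> 'na"
    and \<phi> :: "('p, 'i) el_fm"
  assumes "ak_model M" and "bij tp" and "bij ta"
    and "x \<in> WA M" and "y \<in> WK M"
  shows "ak_sat M x y (transl tp ta \<phi>) \<longleftrightarrow> el_sat (induced_el tp ta M) y \<phi>"
  by (rule ak_sat_transl_iff_el_sat_induced)

end
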